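(* The synchronous nonlinear fixed-point iteration $\mathbf{x}^{p+1} = \mathbf{h}(\mathbf{x}^p)$ is locally convergent, that is, if $\mathbf{x}_*$ is a fixed point of $\mathbf{h}$, it is a point of attraction of the synchronous iteration.
   Context: Let $\mathbf{A}\in\mathbb{R}^{n\times n}$ be partitioned into square $b\times b$ blocks, and $S_B$ a set of block indices containing all diagonal blocks. The unknowns (entries of the block ILU factors $\mathbf{L}_{ij}$, $i>j$, and $\mathbf{U}_{ij}$, $i\le j$, for $(i,j)\in S_B$) form $\mathbf{x}\in\mathbb{R}^m$, $m=|S_B|b^2$, with $\mathbf{X}_{ij}$ the $b\times b$ block for index $(i,j)$. The map $\mathbf{h}:D_B\to\mathbb{R}^m$ is given blockwise by $\mathbf{H}_{ij}(\mathbf{x})=(\mathbf{A}_{ij}-\sum_{k=1}^{j-1}\mathbf{X}_{ik}\mathbf{X}_{kj})\mathbf{X}_{jj}^{-1}$ for $i>j$ and $\mathbf{H}_{ij}(\mathbf{x})=\mathbf{A}_{ij}-\sum_{k=1}^{i-1}\mathbf{X}_{ik}\mathbf{X}_{kj}$ for $i\le j$, on $D_B:=\{\mathbf{x}: \mathbf{X}_{jj}\text{ nonsingular for all diagonal blocks}\}$. Its fixed points are the block ILU factorizations with pattern $S_B$. *)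

theory Defs
  imports "HOL-Analysis.Analysis"
begin

text \<open>There are N block rows/columns, indexed 0..N-1 (0-based);
 each block is a b x b real matrix, with b = CARD('b). The unknown vector x in R^m is represented by the blocks
 x (i,j) for (i,j) in S_B; values of x outside S_B are irrelevant (they are
 treated as zero blocks).\<close>

type_synonym 'b blk = "real ^'b ^'b"

definition blk_of :: "(nat \<times> nat) set \<Rightarrow> (nat \<times> nat \<Rightarrow> 'b::finite blk) \<Rightarrow> nat \<Rightarrow> nat \<Rightarrow> 'b blk" where
  "blk_of SB x i k = (if (i, k) \<in> SB then x (i, k) else 0)"

definition hmap :: "(nat \<Rightarrow> nat \<Rightarrow> 'b::finite blk) \<Rightarrow> (nat \<times> nat) set
      \<Rightarrow> (nat \<times> nat \<Rightarrow> 'b blk) \<Rightarrow> (nat \<times> nat \<Rightarrow> 'b blk)" where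
  "hmap A SB x = (\<lambda>(i, j).
     if (i, j) \<in> SB then
       (if j < i then
          (A i j - (\<Sum>k<j. blk_of SB x i k ** blk_of SB x k j)) ** matrix_inv (x (j, j))
        else A i j - (\<Sum>k<i. blk_of SB x i k ** blk_of SB x k j))
     else 0)"

definition in_DB :: "nat \<Rightarrow> (nat \<times> nat \<Rightarrow> 'b::finite blk) \<Rightarrow> bool" where
  "in_DB N x \<longleftrightarrow> (\<forall>j<N. invertible (x (j, j)))"

definition point_of_attraction ::
  "nat \<Rightarrow> (nat \<times> nat) set \<Rightarrow> ((nat \<times> nat \<Rightarrow> 'b::finite blk) \<Rightarrow> (nat \<times> nat \<Rightarrow> 'b blk))
     \<Rightarrow> (nat \<times> nat \<Rightarrow> 'b blk) \<Rightarrow> bool" where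
  "point_of_attraction N SB h xs \<longleftrightarrow>
     (\<exists>\<epsilon>>0. \<forall>x0. (\<forall>(i, j)\<in>SB. dist (x0 (i, j)) (xs (i, j)) < \<epsilon>) \<longrightarrow>
        (\<forall>p. in_DB N ((h ^^ p) x0)) \<and>
        (\<forall>(i, j)\<in>SB. (\<lambda>p. (h ^^ p) x0 (i, j)) \<longlonglongrightarrow> xs (i, j)))"

end

theory Submission
  imports Defs
begin

text \<open>The synchronous iteration terminates after finitely many sweeps. Give the block
  \<open>(i, j)\<close> the level \<open>2i\<close> if \<open>i \<le> j\<close> (a block of U) and \<open>2j + 1\<close> if \<open>i > j\<close>
  (a block of L). Then \<open>H\<^sub>i\<^sub>j\<close> only reads blocks of strictly smaller level, so by
  induction on \<open>p\<close> every block of level \<open>< p\<close> of \<open>x\<^sup>p\<close> agrees with \<open>x\<^sub>*\<close>, whatever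
  \<open>x\<^sup>0\<close> is; since all levels are below \<open>2N\<close>, \<open>x\<^sup>p = x\<^sub>*\<close> for \<open>p \<ge> 2N\<close>.
  It remains to keep the first \<open>2N\<close> iterates inside the open set \<open>D\<^sub>B\<close>: \<open>h\<close> is
  continuous at its fixed point \<open>x\<^sub>*\<close> (inversion of a nonsingular block is continuous by
  Cramer's rule), hence so are its finitely many iterates, and they all map a small
  neighbourhood of \<open>x\<^sub>*\<close> into \<open>D\<^sub>B\<close>.\<close>

lemma tendsto_matrix_mult:
  fixes f :: "'a \<Rightarrow> real^'n::finite^'m" and g :: "'a \<Rightarrow> real^'k^'n"
  assumes "(f \<longlongrightarrow> A) F" "(g \<longlongrightarrow> B) F"
  shows "((\<lambda>x. f x ** g x) \<longlongrightarrow> A ** B) F"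
  unfolding matrix_matrix_mult_def
  by (intro tendsto_vec_lambda tendsto_sum tendsto_mult tendsto_vec_nth assms)

lemma tendsto_det:
  fixes f :: "'a \<Rightarrow> real^'n::finite^'n"
  assumes "(f \<longlongrightarrow> A) F"
  shows "((\<lambda>x. det (f x)) \<longlongrightarrow> det A) F"
  unfolding det_def
  by (intro tendsto_sum tendsto_mult tendsto_const tendsto_prod tendsto_vec_nth assms)

lemma matrix_inv_nth_cramer:
  fixes A :: "real^'n::finite^'n"
  assumes "det A \<noteq> 0"
  shows "matrix_inv A $ r $ c = det (\<chi> i j. if j = r then axis c 1 $ i else A $ i $ j) / det A"
proof -
  have "invertible A"
    using assms invertible_det_nz by blast
  then have "A ** matrix_inv A = mat 1"
    unfolding invertible_def matrix_inv_def by (metis (mono_tags, lifting) someI_ex)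
  then have "A *v (\<chi> k. matrix_inv A $ k $ c) = axis c 1"
    by (simp add: vec_eq_iff matrix_vector_mult_def matrix_matrix_mult_def axis_def mat_def)
  then have "(\<chi> k. matrix_inv A $ k $ c)
      = (\<chi> k. det (\<chi> i j. if j = k then axis c 1 $ i else A $ i $ j) / det A)"
    by (rule cramer[OF assms, THEN iffD1])
  from arg_cong[where f = "\<lambda>v. v $ r", OF this] show ?thesis
    by (simp only: vec_lambda_beta)
qed

lemma tendsto_matrix_inv:
  fixes f :: "'a \<Rightarrow> real^'n::finite^'n"
  assumes f: "(f \<longlongrightarrow> A) F" and "det A \<noteq> 0"
  shows "((\<lambda>x. matrix_inv (f x)) \<longlongrightarrow> matrix_inv A) F"
proof (intro vec_tendstoI)
  fix r c :: 'n
  let ?cramer = "\<lambda>M :: real^'n^'n. det (\<chi> i j. if j = r then axis c 1 $ i else M $ i $ j) / det M"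
  have "((\<lambda>x. \<chi> i j. if j = r then axis c 1 $ i else f x $ i $ j)
      \<longlongrightarrow> (\<chi> i j. if j = r then axis c 1 $ i else A $ i $ j)) F"
    by (intro tendsto_vec_lambda) (auto intro: tendsto_vec_nth[OF tendsto_vec_nth[OF f]])
  then have "((\<lambda>x. ?cramer (f x)) \<longlongrightarrow> matrix_inv A $ r $ c) F"
    unfolding matrix_inv_nth_cramer[OF \<open>det A \<noteq> 0\<close>]
    by (intro tendsto_divide tendsto_det f \<open>det A \<noteq> 0\<close>)
  moreover have "eventually (\<lambda>x. det (f x) \<noteq> 0) F"
    using tendsto_imp_eventually_ne[OF tendsto_det[OF f] \<open>det A \<noteq> 0\<close>] .
  then have "eventually (\<lambda>x. ?cramer (f x) = matrix_inv (f x) $ r $ c) F"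
    by eventually_elim (simp add: matrix_inv_nth_cramer)
  ultimately show "((\<lambda>x. matrix_inv (f x) $ r $ c) \<longlongrightarrow> matrix_inv A $ r $ c) F"
    by (rule Lim_transform_eventually)
qed

definition nhds_coords :: "'i set \<Rightarrow> ('i \<Rightarrow> 'a::metric_space) \<Rightarrow> ('i \<Rightarrow> 'a) filter" where
  "nhds_coords S y = (INF d\<in>{0<..}. principal {x. \<forall>i\<in>S. dist (x i) (y i) < d})"

lemma eventually_nhds_coords:
  "eventually P (nhds_coords S y) \<longleftrightarrow> (\<exists>d>0. \<forall>x. (\<forall>i\<in>S. dist (x i) (y i) < d) \<longrightarrow> P x)"
  unfolding nhds_coords_def
  by (subst eventually_INF_base)
     (auto simp: eventually_principal Bex_def subset_eq intro: exI[of _ "min a b" for a b])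

lemma tendsto_coord_nhds_coords:
  assumes "i \<in> S"
  shows "((\<lambda>x. x i) \<longlongrightarrow> y i) (nhds_coords S y)"
proof (rule tendstoI)
  fix e :: real
  assume "e > 0"
  then show "eventually (\<lambda>x. dist (x i) (y i) < e) (nhds_coords S y)"
    using assms unfolding eventually_nhds_coords by auto
qed

lemma filterlim_nhds_coordsI:
  assumes "finite S" and "\<And>i. i \<in> S \<Longrightarrow> ((\<lambda>x. f x i) \<longlongrightarrow> y i) F"
  shows "filterlim f (nhds_coords S y) F"
proof (unfold filterlim_iff, intro allI impI)
  fix P
  assume "eventually P (nhds_coords S y)"
  then obtain d where "d > 0" and d: "\<And>x. \<forall>i\<in>S. dist (x i) (y i) < d \<Longrightarrow> P x"
    unfolding eventually_nhds_coords by blast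
  have "eventually (\<lambda>x. \<forall>i\<in>S. dist (f x i) (y i) < d) F"
    using \<open>finite S\<close> by (rule eventually_ball_finite) (use assms(2) \<open>d > 0\<close> tendstoD in blast)
  then show "eventually (\<lambda>x. P (f x)) F"
    by eventually_elim (rule d)
qed

lemma filterlim_funpow:
  assumes "filterlim f F F"
  shows "filterlim (f ^^ n) F F"
proof (induction n)
  case 0
  show ?case by (simp add: filterlim_ident)
next
  case (Suc n)
  show ?case using filterlim_compose[OF assms Suc] by simp
qed

lemma tendsto_blk_of: "((\<lambda>x. blk_of SB x i k) \<longlongrightarrow> blk_of SB y i k) (nhds_coords SB y)"
  unfolding blk_of_def by (cases "(i, k) \<in> SB") (auto intro: tendsto_coord_nhds_coords)

lemma tendsto_hmap:
  assumes "SB \<subseteq> {..<N} \<times> {..<N}" and "\<forall>i<N. (i, i) \<in> SB" and "in_DB N y"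
    and "(i, j) \<in> SB"
  shows "((\<lambda>x. hmap A SB x (i, j)) \<longlongrightarrow> hmap A SB y (i, j)) (nhds_coords SB y)"
proof (cases "j < i")
  case True
  have "j < N"
    using assms(1,4) by auto
  then have "(j, j) \<in> SB" and "det (y (j, j)) \<noteq> 0"
    using assms(2,3) invertible_det_nz unfolding in_DB_def by auto
  then show ?thesis
    using True \<open>(i, j) \<in> SB\<close> unfolding hmap_def
    by (simp, intro tendsto_matrix_mult tendsto_diff tendsto_const tendsto_sum tendsto_blk_of
        tendsto_matrix_inv tendsto_coord_nhds_coords)
next
  case False
  then show ?thesis
    using \<open>(i, j) \<in> SB\<close> unfolding hmap_def
    by (simp, intro tendsto_matrix_mult tendsto_diff tendsto_const tendsto_sum tendsto_blk_of)
qed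

lemma eventually_in_DB:
  assumes "\<forall>i<N. (i, i) \<in> SB" and "in_DB N y"
  shows "eventually (in_DB N) (nhds_coords SB y)"
proof -
  have "eventually (\<lambda>x. \<forall>j\<in>{..<N}. det (x (j, j)) \<noteq> 0) (nhds_coords SB y)"
    using assms invertible_det_nz unfolding in_DB_def
    by (intro eventually_ball_finite ballI tendsto_imp_eventually_ne[OF tendsto_det]
        tendsto_coord_nhds_coords) (auto intro: tendsto_coord_nhds_coords)
  then show ?thesis
    unfolding in_DB_def by eventually_elim (simp add: invertible_det_nz)
qed

definition ilu_level :: "nat \<times> nat \<Rightarrow> nat" where
  "ilu_level = (\<lambda>(i, j). if j < i then 2 * j + 1 else 2 * i)"

lemma hmap_eq_if_lower_levels_eq:
  assumes "SB \<subseteq> {..<N} \<times> {..<N}" and "\<forall>i<N. (i, i) \<in> SB" and "(i, j) \<in> SB"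
    and agree: "\<And>a b. (a, b) \<in> SB \<Longrightarrow> ilu_level (a, b) < ilu_level (i, j) \<Longrightarrow> y (a, b) = z (a, b)"
  shows "hmap A SB y (i, j) = hmap A SB z (i, j)"
proof -
  have blk: "blk_of SB y a b = blk_of SB z a b" if "ilu_level (a, b) < ilu_level (i, j)" for a b
    using agree that unfolding blk_of_def by simp
  have "(\<Sum>k<min i j. blk_of SB y i k ** blk_of SB y k j)
      = (\<Sum>k<min i j. blk_of SB z i k ** blk_of SB z k j)"
    by (intro sum.cong refl arg_cong2[where f = "(**)"] blk) (auto simp: ilu_level_def)
  moreover have "j < i \<Longrightarrow> y (j, j) = z (j, j)"
    using assms(1-3) by (intro agree) (auto simp: ilu_level_def)
  ultimately show ?thesis
    using \<open>(i, j) \<in> SB\<close> by (auto simp: hmap_def min_def)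
qed

lemma hmap_iterate_eq_below_level:
  assumes "SB \<subseteq> {..<N} \<times> {..<N}" and "\<forall>i<N. (i, i) \<in> SB"
    and fixpoint: "\<forall>(i, j)\<in>SB. hmap A SB xs (i, j) = xs (i, j)"
  shows "(i, j) \<in> SB \<Longrightarrow> ilu_level (i, j) < p \<Longrightarrow> (hmap A SB ^^ p) x (i, j) = xs (i, j)"
proof (induction p arbitrary: i j)
  case 0
  then show ?case by simp
next
  case (Suc p)
  have "(hmap A SB ^^ Suc p) x (i, j) = hmap A SB ((hmap A SB ^^ p) x) (i, j)"
    by simp
  also have "\<dots> = hmap A SB xs (i, j)"
    using assms(1,2) Suc by (intro hmap_eq_if_lower_levels_eq) auto
  also have "\<dots> = xs (i, j)"
    using fixpoint \<open>(i, j) \<in> SB\<close> by auto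
  finally show ?case .
qed

lemma hmap_iterate_eq_fixpoint:
  assumes "SB \<subseteq> {..<N} \<times> {..<N}" and "\<forall>i<N. (i, i) \<in> SB"
    and "\<forall>(i, j)\<in>SB. hmap A SB xs (i, j) = xs (i, j)"
    and "(i, j) \<in> SB" and "2 * N \<le> p"
  shows "(hmap A SB ^^ p) x (i, j) = xs (i, j)"
proof (rule hmap_iterate_eq_below_level[OF assms(1-4)])
  show "ilu_level (i, j) < p"
    using assms(1,4,5) by (auto simp: ilu_level_def)
qed

theorem theorem5:
  fixes N :: nat and A :: "nat \<Rightarrow> nat \<Rightarrow> real ^'b::finite ^'b"
    and SB :: "(nat \<times> nat) set" and xs :: "nat \<times> nat \<Rightarrow> real ^'b ^'b"
  assumes "SB \<subseteq> {..<N} \<times> {..<N}"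
    and "\<forall>i<N. (i, i) \<in> SB"
    and "in_DB N xs"
    and "\<forall>(i, j)\<in>SB. hmap A SB xs (i, j) = xs (i, j)"
  shows "point_of_attraction N SB (hmap A SB) xs"
proof -
  let ?h = "hmap A SB" and ?F = "nhds_coords SB xs"
  have "finite SB"
    using assms(1) finite_subset by blast
  have "((\<lambda>x. ?h x (i, j)) \<longlongrightarrow> xs (i, j)) ?F" if "(i, j) \<in> SB" for i j
    using tendsto_hmap[OF assms(1-3) that, of A] assms(4) that by auto
  then have "filterlim ?h ?F ?F"
    by (intro filterlim_nhds_coordsI[OF \<open>finite SB\<close>]) auto
  then have "filterlim (?h ^^ p) ?F ?F" for p
    by (rule filterlim_funpow)
  then have "eventually (\<lambda>x. \<forall>p\<in>{..<2 * N}. in_DB N ((?h ^^ p) x)) ?F"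
    using eventually_in_DB[OF assms(2,3)]
    by (intro eventually_ball_finite) (auto simp: filterlim_iff)
  then obtain \<epsilon> where "\<epsilon> > 0"
    and early: "\<And>x p. \<forall>ij\<in>SB. dist (x ij) (xs ij) < \<epsilon> \<Longrightarrow> p < 2 * N \<Longrightarrow> in_DB N ((?h ^^ p) x)"
    unfolding eventually_nhds_coords by auto
  note exact = hmap_iterate_eq_fixpoint[OF assms(1,2,4)]
  have "in_DB N ((?h ^^ p) x)" if "\<forall>ij\<in>SB. dist (x ij) (xs ij) < \<epsilon>" for x p
    using early[OF that] exact assms(2,3) unfolding in_DB_def by (cases "p < 2 * N") auto
  moreover have "(\<lambda>p. (?h ^^ p) x (i, j)) \<longlonglongrightarrow> xs (i, j)" if "(i, j) \<in> SB" for x i j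
    using exact[OF that] by (intro tendsto_eventually) (auto simp: eventually_sequentially)
  ultimately show ?thesis
    unfolding point_of_attraction_def using \<open>\<epsilon> > 0\<close> by fast
qed

end
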